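(* Let $a,b\geq1$ and let $\mu=(\mu_{ij})_{i,j\ge0}$ be a semi-infinite complex matrix with $\mu_{i+a,j+b}=\mu_{ij}$, and set $\widehat\mu_{ij}=\mu_{i,j+b}$. Define bilinear forms on $\mathbb C[z]$ by $\langle z^i,z^j\rangle_\mu=\mu_{ij}$ and $\langle z^i,z^j\rangle_{\widehat\mu}=\widehat\mu_{ij}$. Let $p^{(1)}_j,p^{(2)}_j$ and $\widehat p^{(1)}_j,\widehat p^{(2)}_j$ ($j\ge0$) be monic polynomials of degree $j$ with $$\langle p^{(1)}_i,p^{(2)}_j\rangle_\mu=\delta_{ij}h_i,\qquad \langle \widehat p^{(1)}_i,\widehat p^{(2)}_j\rangle_{\widehat\mu}=\delta_{ij}\widehat h_i,$$ and let $S_1,S_2,\widehat S_1,\widehat S_2$ be the semi-infinite matrices defined by $$p^{(1)}_i(z)=\sum_{k=0}^i(S_1)_{ik}z^k,\quad p^{(2)}_i(z)=h_i\sum_{k=0}^i(S_2^{-1})_{ki}z^k,$$ and analogously for $\widehat p^{(1)},\widehat p^{(2)}$ with $\widehat S_1,\widehat S_2,\widehat h$. Suppose these satisfy $$S_1\Lambda^a\widehat S_1^{-1}=S_2\widehat S_2^{-1}=:A,\qquad S_1\widehat S_1^{-1}=S_2\Lambda^{-b}\widehat S_2^{-1}=:B .$$ Then, writing $p^{(i)}$ (resp. $\widehat p^{(i)}$) for the semi-infinite column vector with $j$-th entry $p^{(i)}_j$ (resp. $\widehat p^{(i)}_j$), $h=\mathrm{diag}(h_0,h_1,\dots)$ and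 $\widehat h=\mathrm{diag}(\widehat h_0,\widehat h_1,\dots)$, $$A\widehat p^{(1)}=z^ap^{(1)},\qquad \widehat hA^Th^{-1}p^{(2)}=\widehat p^{(2)},\qquad B\widehat p^{(1)}=p^{(1)},\qquad \widehat hB^Th^{-1}p^{(2)}=z^b\widehat p^{(2)} .$$
   Context: In the semi-infinite setting, $\Lambda$ is the semi-infinite matrix $(\Lambda)_{ij}=\delta_{i+1,j}$ ($i,j\ge0$) and $\Lambda^{-1}$ denotes its transpose $(\Lambda^{-1})_{ij}=\delta_{i,j+1}$ (a right inverse only: $\Lambda^{-1}\Lambda=1-E_{11}$ with $(E_{11})_{ij}=\delta_{i0}\delta_{j0}$). $A^T,B^T$ denote transposes. All the $h_i,\widehat h_i$ are assumed nonzero. *)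

theory Defs
  imports "HOL-Analysis.Analysis" "HOL-Computational_Algebra.Polynomial"
begin

type_synonym smat = "nat \<Rightarrow> nat \<Rightarrow> complex"

text \<open>Matrix product (the sums occurring in the statement all have finite support).\<close>
definition mmult :: "smat \<Rightarrow> smat \<Rightarrow> smat" where
  "mmult X Y = (\<lambda>i j. \<Sum>\<^sub>\<infinity>k. X i k * Y k j)"

definition idm :: smat where
  "idm = (\<lambda>i j. if i = j then 1 else 0)"

definition Lam :: smat where
  "Lam = (\<lambda>i j. if j = i + 1 then 1 else 0)"

definition Laminv :: smat where
  "Laminv = (\<lambda>i j. if i = j + 1 then 1 else 0)"

primrec mpow :: "smat \<Rightarrow> nat \<Rightarrow> smat" where
  "mpow X 0 = idm"
| "mpow X (Suc n) = mmult (mpow X n) X"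

definition lower_tri :: "smat \<Rightarrow> bool" where
  "lower_tri X \<longleftrightarrow> (\<forall>i j. i < j \<longrightarrow> X i j = 0)"

definition upper_tri :: "smat \<Rightarrow> bool" where
  "upper_tri X \<longleftrightarrow> (\<forall>i j. j < i \<longrightarrow> X i j = 0)"

definition bform :: "smat \<Rightarrow> complex poly \<Rightarrow> complex poly \<Rightarrow> complex" where
  "bform \<mu> f g = (\<Sum>i\<le>degree f. \<Sum>j\<le>degree g. coeff f i * coeff g j * \<mu> i j)"

end

theory Submission
  imports Defs
begin

text \<open>With \<open>\<chi> = (1, z, z^2, ...)^T\<close> we have \<open>p1 = S1 \<chi>\<close>, \<open>p1h = S1h \<chi>\<close>, \<open>p2 = h S2inv^T \<chi>\<close>,
  \<open>p2h = hh S2hinv^T \<chi>\<close>, so each identity is a cancellation of a triangular matrix against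
  its inverse: \<open>A p1h = S1 \<Lambda>^a S1hinv S1h \<chi> = S1 \<Lambda>^a \<chi> = z^a p1\<close>, and on the transposed side
  \<open>S2inv A = S2hinv\<close> and \<open>S2inv B = \<Lambda>^{-b} S2hinv\<close>, where left multiplication by \<open>\<Lambda>^{-b}\<close>
  is multiplication by \<open>z^b\<close>. Products of semi-infinite matrices need not be associative;
  every product reassociated here has finitely many nonzero terms per entry, by triangularity
  and the finite degrees.\<close>

lemma infsum_eq_sum_finite_support:
  fixes f :: "'a \<Rightarrow> 'b::{comm_monoid_add, t2_space}"
  assumes "finite F" "\<And>x. x \<notin> F \<Longrightarrow> f x = 0"
  shows "(\<Sum>\<^sub>\<infinity>x. f x) = sum f F"
proof -
  have "(\<Sum>\<^sub>\<infinity>x. f x) = infsum f F"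
    by (rule infsum_cong_neutral) (use assms in auto)
  then show ?thesis using assms by simp
qed

lemma mmult_idm_left [simp]: "mmult idm X = X"
proof (intro ext)
  fix i j
  have "(\<Sum>\<^sub>\<infinity>k. idm i k * X k j) = (\<Sum>k\<in>{i}. idm i k * X k j)"
    by (rule infsum_eq_sum_finite_support) (auto simp: idm_def)
  then show "mmult idm X i j = X i j" by (simp add: mmult_def idm_def)
qed

lemma mmult_idm_right [simp]: "mmult X idm = X"
proof (intro ext)
  fix i j
  have "(\<Sum>\<^sub>\<infinity>k. X i k * idm k j) = (\<Sum>k\<in>{j}. X i k * idm k j)"
    by (rule infsum_eq_sum_finite_support) (auto simp: idm_def)
  then show "mmult X idm i j = X i j" by (simp add: mmult_def idm_def)
qed

lemma mmult_assoc_row_finite: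
  assumes "\<And>m. N < m \<Longrightarrow> U i m = 0"
    and "\<And>m j. m \<le> N \<Longrightarrow> M < j \<Longrightarrow> V m j = 0"
  shows "mmult (mmult U V) W i l = mmult U (mmult V W) i l"
proof -
  have UV: "mmult U V i j = (\<Sum>m\<le>N. U i m * V m j)" for j
    unfolding mmult_def by (rule infsum_eq_sum_finite_support) (use assms in auto)
  have VW: "mmult V W m l = (\<Sum>j\<le>M. V m j * W j l)" if "m \<le> N" for m
    unfolding mmult_def by (rule infsum_eq_sum_finite_support) (use assms that in auto)
  have "mmult (mmult U V) W i l = (\<Sum>j\<le>M. (\<Sum>m\<le>N. U i m * V m j) * W j l)"
    unfolding mmult_def[of "mmult U V"] UV
    by (rule infsum_eq_sum_finite_support) (use assms in auto)
  also have "\<dots> = (\<Sum>m\<le>N. U i m * (\<Sum>j\<le>M. V m j * W j l))"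
    by (simp add: sum_distrib_left sum_distrib_right mult.assoc sum.swap[of _ "{..M}"])
  also have "\<dots> = (\<Sum>m\<le>N. U i m * mmult V W m l)"
    using VW by simp
  also have "\<dots> = mmult U (mmult V W) i l"
    unfolding mmult_def[of U] by (rule infsum_eq_sum_finite_support[symmetric]) (use assms in auto)
  finally show ?thesis .
qed

lemma mmult_assoc_col_finite:
  assumes "\<And>j. N < j \<Longrightarrow> W j l = 0"
    and "\<And>m j. j \<le> N \<Longrightarrow> M < m \<Longrightarrow> V m j = 0"
  shows "mmult (mmult U V) W i l = mmult U (mmult V W) i l"
proof -
  have VW: "mmult V W m l = (\<Sum>j\<le>N. V m j * W j l)" for m
    unfolding mmult_def by (rule infsum_eq_sum_finite_support) (use assms in auto)
  have UV: "mmult U V i j = (\<Sum>m\<le>M. U i m * V m j)" if "j \<le> N" for j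
    unfolding mmult_def by (rule infsum_eq_sum_finite_support) (use assms that in auto)
  have "mmult U (mmult V W) i l = (\<Sum>m\<le>M. U i m * (\<Sum>j\<le>N. V m j * W j l))"
    unfolding mmult_def[of U] VW
    by (rule infsum_eq_sum_finite_support) (use assms in auto)
  also have "\<dots> = (\<Sum>j\<le>N. (\<Sum>m\<le>M. U i m * V m j) * W j l)"
    by (simp add: sum_distrib_left sum_distrib_right mult.assoc sum.swap[of _ "{..N}"])
  also have "\<dots> = (\<Sum>j\<le>N. mmult U V i j * W j l)"
    using UV by simp
  also have "\<dots> = mmult (mmult U V) W i l"
    unfolding mmult_def[of "mmult U V"]
    by (rule infsum_eq_sum_finite_support[symmetric]) (use assms in auto)
  finally show ?thesis by simp
qed

lemma mpow_Lam: "mpow Lam n = (\<lambda>i j. if j = i + n then 1 else 0)"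
proof (induction n)
  case 0
  then show ?case by (auto simp: idm_def fun_eq_iff)
next
  case (Suc n)
  show ?case
  proof (intro ext)
    fix i j
    have "mpow Lam (Suc n) i j = (\<Sum>k\<in>{i + n}. (if k = i + n then 1 else 0) * Lam k j)"
      unfolding mpow.simps mmult_def Suc
      by (rule infsum_eq_sum_finite_support) auto
    then show "mpow Lam (Suc n) i j = (if j = i + Suc n then 1 else 0)"
      by (simp add: Lam_def)
  qed
qed

lemma mpow_Laminv: "mpow Laminv n = (\<lambda>i j. if i = j + n then 1 else 0)"
proof (induction n)
  case 0
  then show ?case by (simp add: idm_def)
next
  case (Suc n)
  show ?case
  proof (intro ext)
    fix i j
    have "mpow Laminv (Suc n) i j = (\<Sum>k\<in>{j + 1}. (if i = k + n then 1 else 0) * Laminv k j)"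
      unfolding mpow.simps mmult_def Suc
      by (rule infsum_eq_sum_finite_support) (auto simp: Laminv_def)
    then show "mpow Laminv (Suc n) i j = (if i = j + Suc n then 1 else 0)"
      by (simp add: Laminv_def)
  qed
qed

lemma mmult_mpow_Lam_right: "mmult X (mpow Lam n) i j = (if n \<le> j then X i (j - n) else 0)"
proof -
  have "mmult X (mpow Lam n) i j = (\<Sum>l\<in>{j - n}. X i l * (if j = l + n then 1 else 0))"
    unfolding mmult_def mpow_Lam by (rule infsum_eq_sum_finite_support) auto
  then show ?thesis by auto
qed

lemma mmult_mpow_Laminv_left: "mmult (mpow Laminv n) X i j = (if n \<le> i then X (i - n) j else 0)"
proof -
  have "mmult (mpow Laminv n) X i j = (\<Sum>l\<in>{i - n}. (if i = l + n then 1 else 0) * X l j)"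
    unfolding mmult_def mpow_Laminv by (rule infsum_eq_sum_finite_support) auto
  then show ?thesis by auto
qed

lemma mmult_cancel_lower_tri_right:
  assumes "lower_tri Yinv" "mmult Yinv Y = idm"
    and "\<And>m. N < m \<Longrightarrow> X i m = 0"
  shows "mmult (mmult X Yinv) Y i k = X i k"
proof -
  have "mmult (mmult X Yinv) Y i k = mmult X (mmult Yinv Y) i k"
    by (rule mmult_assoc_row_finite[where N = N and M = N])
      (use assms in \<open>auto simp: lower_tri_def\<close>)
  then show ?thesis using assms(2) by simp
qed

lemma mmult_cancel_upper_tri_left:
  assumes "upper_tri Y" "mmult Yinv Y = idm"
    and "\<And>m. N < m \<Longrightarrow> W m i = 0"
  shows "mmult Yinv (mmult Y W) k i = W k i"
proof -
  have "mmult Yinv (mmult Y W) k i = mmult (mmult Yinv Y) W k i"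
    by (rule mmult_assoc_col_finite[where N = N and M = N, symmetric])
      (use assms in \<open>auto simp: upper_tri_def\<close>)
  then show ?thesis using assms(2) by simp
qed

theorem proposition2p3:
  fixes a b :: nat
    and \<mu> \<mu>h :: smat
    and p1 p2 p1h p2h :: "nat \<Rightarrow> complex poly"
    and h hh :: "nat \<Rightarrow> complex"
    and S1 S2inv S1h S2hinv S2 S1hinv A B :: smat
  assumes ab: "a \<ge> 1" "b \<ge> 1"
    and per: "\<And>i j. \<mu> (i + a) (j + b) = \<mu> i j"
    and muh: "\<And>i j. \<mu>h i j = \<mu> i (j + b)"
    and monic: "\<And>j. degree (p1 j) = j \<and> lead_coeff (p1 j) = 1"
               "\<And>j. degree (p2 j) = j \<and> lead_coeff (p2 j) = 1"
               "\<And>j. degree (p1h j) = j \<and> lead_coeff (p1h j) = 1"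
               "\<And>j. degree (p2h j) = j \<and> lead_coeff (p2h j) = 1"
    and hnz: "\<And>i. h i \<noteq> 0" "\<And>i. hh i \<noteq> 0"
    and orth: "\<And>i j. bform \<mu> (p1 i) (p2 j) = (if i = j then h i else 0)"
    and orthh: "\<And>i j. bform \<mu>h (p1h i) (p2h j) = (if i = j then hh i else 0)"
    and S1_def: "\<And>i k. S1 i k = coeff (p1 i) k"
    and S2inv_def: "\<And>k i. h i * S2inv k i = coeff (p2 i) k"
    and S1h_def: "\<And>i k. S1h i k = coeff (p1h i) k"
    and S2hinv_def: "\<And>k i. hh i * S2hinv k i = coeff (p2h i) k"
    and S2_inv: "upper_tri S2" "mmult S2 S2inv = idm" "mmult S2inv S2 = idm"
    and S1h_inv: "lower_tri S1hinv" "mmult S1h S1hinv = idm" "mmult S1hinv S1h = idm"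
    and A1: "A = mmult (mmult S1 (mpow Lam a)) S1hinv"
    and A2: "A = mmult S2 S2hinv"
    and B1: "B = mmult S1 S1hinv"
    and B2: "B = mmult (mmult S2 (mpow Laminv b)) S2hinv"
  shows "(\<forall>i k. (\<Sum>\<^sub>\<infinity>j. A i j * coeff (p1h j) k) = coeff (monom 1 a * p1 i) k)
    \<and> (\<forall>i k. hh i * (\<Sum>\<^sub>\<infinity>j. A j i * inverse (h j) * coeff (p2 j) k) = coeff (p2h i) k)
    \<and> (\<forall>i k. (\<Sum>\<^sub>\<infinity>j. B i j * coeff (p1h j) k) = coeff (p1 i) k)
    \<and> (\<forall>i k. hh i * (\<Sum>\<^sub>\<infinity>j. B j i * inverse (h j) * coeff (p2 j) k) = coeff (monom 1 b * p2h i) k)"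
proof -
  have S1_row: "S1 i m = 0" if "i < m" for i m
    using that monic(1) by (simp add: S1_def coeff_eq_0)
  have S2hinv_col: "S2hinv m i = 0" if "i < m" for m i
    using S2hinv_def[of i m] that monic(4) hnz(2) by (simp add: coeff_eq_0)
  have S2inv_eq: "inverse (h j) * coeff (p2 j) k = S2inv k j" for j k
    using S2inv_def[of j k] hnz(1)[of j] by (auto simp: field_simps)
  have row_side: "(\<Sum>\<^sub>\<infinity>j. C i j * coeff (p1h j) k) = mmult C S1h i k" for C i k
    by (simp add: mmult_def S1h_def)
  have col_side: "(\<Sum>\<^sub>\<infinity>j. C j i * inverse (h j) * coeff (p2 j) k) = mmult S2inv C k i" for C i k
    by (simp add: mmult_def S2inv_eq[symmetric] mult_ac)
  have "mmult A S1h i k = mmult S1 (mpow Lam a) i k" for i k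
    unfolding A1 by (rule mmult_cancel_lower_tri_right[OF S1h_inv(1,3), where N = "i + a"])
      (simp add: mmult_mpow_Lam_right S1_row)
  moreover have "mmult S2inv A k i = S2hinv k i" for i k
    unfolding A2 by (rule mmult_cancel_upper_tri_left[OF S2_inv(1,3), where N = i])
      (simp add: S2hinv_col)
  moreover have "mmult B S1h i k = S1 i k" for i k
    unfolding B1 by (rule mmult_cancel_lower_tri_right[OF S1h_inv(1,3), where N = i])
      (simp add: S1_row)
  moreover have "mmult S2inv B k i = mmult (mpow Laminv b) S2hinv k i" for i k
  proof -
    have "B = mmult S2 (mmult (mpow Laminv b) S2hinv)"
    proof (intro ext)
      fix j l
      show "B j l = mmult S2 (mmult (mpow Laminv b) S2hinv) j l"
        unfolding B2 by (rule mmult_assoc_col_finite[where N = l and M = "l + b"])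
          (auto simp: S2hinv_col mpow_Laminv)
    qed
    then show ?thesis
      by (simp add: mmult_cancel_upper_tri_left[OF S2_inv(1,3), where N = "i + b"]
          mmult_mpow_Laminv_left S2hinv_col)
  qed
  ultimately show ?thesis
    by (simp add: row_side col_side mmult_mpow_Lam_right mmult_mpow_Laminv_left
        S1_def S2hinv_def coeff_monom_mult)
qed

end
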